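(* $D_{\mathbb{C},2}\ge 1.1066$. More precisely, for $f_2(a,b,c)=\dfrac{(|a|^{4/3}+|b|^{4/3}+|c|^{4/3})^{3/4}}{(|a|+|b|)\sqrt{1+\frac{c^2}{4|ab|}}}$ one has $D_{\mathbb{C},2}\ge f_2\!\left(1,-1,\tfrac{352203}{125000}\right)\approx1.1066$.
   Context: $\ell_\infty^N(\mathbb{C})$ is $\mathbb{C}^N$ with the sup norm, and for a polynomial $P$ on it, $\|P\|=\sup\{|P(z)|:|z_i|\le1\ \forall i\}$. $D_{\mathbb{C},m}$ is the smallest constant $D$ such that for every $N$ and every $m$-homogeneous polynomial $P(z)=\sum_{|\alpha|=m}a_\alpha z^\alpha$ on $\ell_\infty^N(\mathbb{C})$, $\big(\sum_{|\alpha|=m}|a_\alpha|^{\frac{2m}{m+1}}\big)^{\frac{m+1}{2m}}\le D\|P\|$. *)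

theory Defs
  imports "HOL-Analysis.Analysis"
begin

definition multi_idx :: "nat \<Rightarrow> nat \<Rightarrow> (nat \<Rightarrow> nat) set" where
  "multi_idx N m = {\<alpha>. (\<forall>i\<ge>N. \<alpha> i = 0) \<and> (\<Sum>i<N. \<alpha> i) = m}"

definition hpoly :: "nat \<Rightarrow> nat \<Rightarrow> ((nat \<Rightarrow> nat) \<Rightarrow> complex) \<Rightarrow> (nat \<Rightarrow> complex) \<Rightarrow> complex" where
  "hpoly N m a z = (\<Sum>\<alpha>\<in>multi_idx N m. a \<alpha> * (\<Prod>i<N. z i ^ \<alpha> i))"

definition hpoly_norm :: "nat \<Rightarrow> nat \<Rightarrow> ((nat \<Rightarrow> nat) \<Rightarrow> complex) \<Rightarrow> real" where
  "hpoly_norm N m a = Sup {cmod (hpoly N m a z) | z. \<forall>i<N. cmod (z i) \<le> 1}"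

definition coeff_norm :: "nat \<Rightarrow> nat \<Rightarrow> ((nat \<Rightarrow> nat) \<Rightarrow> complex) \<Rightarrow> real" where
  "coeff_norm N m a =
     (\<Sum>\<alpha>\<in>multi_idx N m. cmod (a \<alpha>) powr (2 * real m / (real m + 1))) powr ((real m + 1) / (2 * real m))"

definition BH_admissible :: "nat \<Rightarrow> real \<Rightarrow> bool" where
  "BH_admissible m D \<longleftrightarrow> (\<forall>N a. coeff_norm N m a \<le> D * hpoly_norm N m a)"

text \<open>D_{C,m}: the smallest admissible constant (as an extended real; +\<infinity> if none).\<close>
definition D_C :: "nat \<Rightarrow> ereal" where
  "D_C m = Inf {ereal D | D. BH_admissible m D}"

definition f2 :: "real \<Rightarrow> real \<Rightarrow> real \<Rightarrow> real" where
  "f2 a b c = (\<bar>a\<bar> powr (4/3) + \<bar>b\<bar> powr (4/3) + \<bar>c\<bar> powr (4/3)) powr (3/4)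
      / ((\<bar>a\<bar> + \<bar>b\<bar>) * sqrt (1 + c^2 / (4 * \<bar>a * b\<bar>)))"

end

theory Submission
  imports Defs
begin

(* A single polynomial certifies a lower bound for D_{C,m}: if P has
   coefficient norm |P|_coef > 0 and sup norm at most B, then every admissible D satisfies
   |P|_coef <= D * B, hence D_{C,m} >= |P|_coef / B.  We use the 2-homogeneous polynomial
   P_c(z) = z_0^2 - z_1^2 + c z_0 z_1 on the bidisc.  Its coefficients 1, -1, c give
   |P_c|_coef = (2 + |c|^(4/3))^(3/4), and writing p = |z_0|^2, q = |z_1|^2,
   x = Re(z_0 conj z_1) one finds
     |P_c(z)|^2 = (p+q)^2 + c^2 p q - 4x^2 + 2c(p-q)x <= (p+q)^2 (1 + c^2/4) <= 4 + c^2
   by completing the square in x.  The quotient is exactly f2 1 (-1) c, so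
   D_{C,2} >= f2 1 (-1) c for every real c; the theorem is the case c = 352203/125000. *)

lemma hpoly_norm_bounds:
  assumes bound: "\<And>z. (\<forall>i<N. cmod (z i) \<le> 1) \<Longrightarrow> cmod (hpoly N m a z) \<le> B"
  shows "0 \<le> hpoly_norm N m a" and "hpoly_norm N m a \<le> B"
proof -
  define S where "S = {cmod (hpoly N m a z) | z. \<forall>i<N. cmod (z i) \<le> 1}"
  have S_le: "\<And>s. s \<in> S \<Longrightarrow> s \<le> B"
    unfolding S_def using bound by blast
  have zero_in: "cmod (hpoly N m a (\<lambda>_. 0)) \<in> S"
    unfolding S_def by auto
  have "0 \<le> Sup S"
    using zero_in S_le by (intro cSup_upper2[OF zero_in]) (auto intro: bdd_aboveI[of S B])
  moreover have "Sup S \<le> B"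
    using zero_in S_le by (intro cSup_least) auto
  ultimately show "0 \<le> hpoly_norm N m a" "hpoly_norm N m a \<le> B"
    unfolding hpoly_norm_def S_def by simp_all
qed

lemma D_C_lower_bound:
  assumes coef_pos: "0 < coeff_norm N m a"
    and norm_nonneg: "0 \<le> hpoly_norm N m a" and norm_le: "hpoly_norm N m a \<le> B"
  shows "ereal (coeff_norm N m a / B) \<le> D_C m"
  unfolding D_C_def
proof (rule Inf_greatest, clarify)
  fix D assume "BH_admissible m D"
  then have adm: "coeff_norm N m a \<le> D * hpoly_norm N m a"
    unfolding BH_admissible_def by blast
  have "D > 0"
    using adm coef_pos norm_nonneg by (smt (verit) mult_nonpos_nonneg)
  then have "coeff_norm N m a \<le> D * B"
    using adm norm_le by (smt (verit) mult_left_mono)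
  moreover have "B > 0"
    using adm coef_pos norm_nonneg norm_le by (smt (verit) mult_eq_0_iff)
  ultimately show "ereal (coeff_norm N m a / B) \<le> ereal D"
    by (simp add: divide_le_eq mult.commute)
qed

definition bideg :: "nat \<Rightarrow> nat \<Rightarrow> nat" where
  "bideg k = (\<lambda>i. if i = 0 then k else if i = 1 then 2 - k else 0)"

lemma multi_idx_2_2: "multi_idx 2 2 = bideg ` {0, 1, 2}"
proof
  show "multi_idx 2 2 \<subseteq> bideg ` {0, 1, 2}"
  proof
    fix \<alpha> assume "\<alpha> \<in> multi_idx 2 2"
    then have vanish: "\<forall>i\<ge>2. \<alpha> i = 0" and total: "\<alpha> 0 + \<alpha> 1 = 2"
      by (auto simp: multi_idx_def numeral_2_eq_2)
    have "\<alpha> = bideg (\<alpha> 0)"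
    proof
      fix i show "\<alpha> i = bideg (\<alpha> 0) i"
        using vanish total by (cases "i = 0"; cases "i = 1") (auto simp: bideg_def)
    qed
    moreover have "\<alpha> 0 \<in> {0, 1, 2}"
      using total by auto
    ultimately show "\<alpha> \<in> bideg ` {0, 1, 2}" by blast
  qed
  show "bideg ` {0, 1, 2} \<subseteq> multi_idx 2 2"
    by (auto simp: multi_idx_def bideg_def numeral_2_eq_2)
qed

lemma sum_multi_idx_2_2:
  "sum f (multi_idx 2 2) = f (bideg 0) + f (bideg 1) + f (bideg 2)"
proof -
  have "inj_on bideg {0, 1, 2}"
    by (auto simp: inj_on_def bideg_def fun_eq_iff)
  then have "sum f (bideg ` {0, 1, 2}) = sum (f \<circ> bideg) {0, 1, 2}"
    by (rule sum.reindex)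
  then show ?thesis
    unfolding multi_idx_2_2 by (simp add: add.assoc)
qed

definition Pc_coeff :: "real \<Rightarrow> (nat \<Rightarrow> nat) \<Rightarrow> complex" where
  "Pc_coeff c \<alpha> = (if \<alpha> 0 = 2 then 1 else if \<alpha> 0 = 0 then -1 else complex_of_real c)"

lemma hpoly_Pc:
  "hpoly 2 2 (Pc_coeff c) z = z 0 ^ 2 - z 1 ^ 2 + complex_of_real c * z 0 * z 1"
  unfolding hpoly_def sum_multi_idx_2_2
  by (simp add: Pc_coeff_def bideg_def numeral_2_eq_2 lessThan_Suc power2_eq_square)

lemma coeff_norm_Pc: "coeff_norm 2 2 (Pc_coeff c) = (2 + \<bar>c\<bar> powr (4/3)) powr (3/4)"
proof -
  have "2 * real 2 / (real 2 + 1) = 4/3" and "(real 2 + 1) / (2 * real 2) = 3/4"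
    by simp_all
  then show ?thesis
    unfolding coeff_norm_def sum_multi_idx_2_2 by (simp add: Pc_coeff_def bideg_def)
qed

text \<open>The sup-norm estimate for P_c on the bidisc, by completing the square in
  x = Re(u conj v).\<close>
lemma Pc_bound:
  fixes u v :: complex
  assumes "cmod u \<le> 1" "cmod v \<le> 1"
  shows "cmod (u^2 - v^2 + complex_of_real c * u * v) \<le> sqrt (4 + c^2)"
proof -
  obtain a b d e where uv: "u = Complex a b" "v = Complex d e"
    by (metis complex.exhaust)
  define p q x where "p = a^2 + b^2" and "q = d^2 + e^2" and "x = a*d + b*e"
  have "p \<le> 1" "q \<le> 1"
    using assms uv by (simp_all add: p_def q_def cmod_def power2_eq_square)
  moreover have "0 \<le> p" "0 \<le> q"
    unfolding p_def q_def by simp_all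
  ultimately have pq_sq: "(p + q)^2 \<le> 4"
    using power_mono[of "p + q" 2 2] by simp
  have expand: "(cmod (u^2 - v^2 + complex_of_real c * u * v))^2
      = (p + q)^2 + c^2*p*q - 4*x^2 + 2*c*(p - q)*x"
    unfolding uv p_def q_def x_def cmod_power2
    by (simp add: power2_eq_square algebra_simps)
  have square: "(p + q)^2 + c^2*p*q - 4*x^2 + 2*c*(p - q)*x
      = (p + q)^2 * (1 + c^2/4) - (2*x - c*(p - q)/2)^2"
    by (simp add: power2_eq_square field_simps)
  have "(cmod (u^2 - v^2 + complex_of_real c * u * v))^2 \<le> (p + q)^2 * (1 + c^2/4)"
    unfolding expand square by simp
  also have "\<dots> \<le> 4 * (1 + c^2/4)"
    using pq_sq by (intro mult_right_mono) (simp_all add: add_nonneg_nonneg)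
  finally show ?thesis
    by (simp add: real_le_rsqrt)
qed

lemma f2_Pc: "f2 1 (-1) c = coeff_norm 2 2 (Pc_coeff c) / sqrt (4 + c^2)"
proof -
  have "sqrt (4 + c^2) = sqrt (2^2 * (1 + c^2/4))"
    by simp
  also have "\<dots> = 2 * sqrt (1 + c^2/4)"
    by (simp only: real_sqrt_mult) simp
  finally show ?thesis
    unfolding f2_def coeff_norm_Pc by simp
qed

lemma D_C_2_ge_f2: "ereal (f2 1 (-1) c) \<le> D_C 2"
proof -
  have "\<And>z. \<forall>i<2. cmod (z i) \<le> 1 \<Longrightarrow> cmod (hpoly 2 2 (Pc_coeff c) z) \<le> sqrt (4 + c^2)"
    unfolding hpoly_Pc by (simp add: Pc_bound)
  note norm = hpoly_norm_bounds[OF this]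
  have "0 < 2 + \<bar>c\<bar> powr (4/3)"
    by (simp add: add_pos_nonneg)
  then have "0 < coeff_norm 2 2 (Pc_coeff c)"
    unfolding coeff_norm_Pc by simp
  from D_C_lower_bound[OF this norm] show ?thesis
    unfolding f2_Pc .
qed

theorem mainTheorem12:
  shows "D_C 2 \<ge> ereal (f2 1 (-1) (352203 / 125000))"
  using D_C_2_ge_f2 .

end
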